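(* Let $G=(V,E)$ be a finite, simple, connected $K_w$-minor-free graph and let $U\subseteq V$ with $|U|\ge\max(w,4)$. Then every node of $U$ that participates in the maximum number of good quadruples in $U$ (among all nodes of $U$) is $U$-good.
   Context: The interval $I(u,v)$ is the set of nodes on at least one shortest $u$–$v$ path in $G$. A quadruple in $U$ is a set $\{(a,b),(c,d)\}$ of two unordered pairs with $a,b,c,d\in U$ distinct; it is good if $I(a,b)\cap I(c,d)\ne\emptyset$; a node participates in it if it is one of $a,b,c,d$. Let $q(U)$ and $q_{\mathrm{good}}(U)$ be the numbers of quadruples and of good quadruples in $U$, and $\epsilon_U=q_{\mathrm{good}}(U)/(8q(U))$. A node $a\in U$ is $U$-good if there is a subset $U_a\subseteq U$ of size at least $\lceil 4\epsilon_U(|U|-1)\rceil$ such that for every $b\in U_a$ the number of pairs $c,d\in U$ for which $\{(a,b),(c,d)\}$ is a good quadruple is at least $\lceil 4\epsilon_U\binom{|U|-2}{2}\rceil$. *)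

theory Defs
  imports Complex_Main
begin

definition simple_graph :: "'a set \<Rightarrow> ('a \<Rightarrow> 'a \<Rightarrow> bool) \<Rightarrow> bool" where
  "simple_graph V E \<longleftrightarrow> finite V \<and> (\<forall>x y. E x y \<longrightarrow> x \<in> V \<and> y \<in> V)
     \<and> (\<forall>x y. E x y \<longrightarrow> E y x) \<and> (\<forall>x. \<not> E x x)"

definition connected_set :: "('a \<Rightarrow> 'a \<Rightarrow> bool) \<Rightarrow> 'a set \<Rightarrow> bool" where
  "connected_set E S \<longleftrightarrow> (\<forall>u\<in>S. \<forall>v\<in>S. (\<lambda>x y. E x y \<and> x \<in> S \<and> y \<in> S)\<^sup>*\<^sup>* u v)"

definition connected_graph :: "'a set \<Rightarrow> ('a \<Rightarrow> 'a \<Rightarrow> bool) \<Rightarrow> bool" where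
  "connected_graph V E \<longleftrightarrow> V \<noteq> {} \<and> connected_set E V"

definition has_complete_minor :: "'a set \<Rightarrow> ('a \<Rightarrow> 'a \<Rightarrow> bool) \<Rightarrow> nat \<Rightarrow> bool" where
  "has_complete_minor V E w \<longleftrightarrow> (\<exists>B :: nat \<Rightarrow> 'a set.
      (\<forall>i<w. B i \<noteq> {} \<and> B i \<subseteq> V \<and> connected_set E (B i))
    \<and> (\<forall>i<w. \<forall>j<w. i \<noteq> j \<longrightarrow> B i \<inter> B j = {})
    \<and> (\<forall>i<w. \<forall>j<w. i \<noteq> j \<longrightarrow> (\<exists>x\<in>B i. \<exists>y\<in>B j. E x y)))"

definition walk :: "'a set \<Rightarrow> ('a \<Rightarrow> 'a \<Rightarrow> bool) \<Rightarrow> 'a list \<Rightarrow> bool" where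
  "walk V E xs \<longleftrightarrow> xs \<noteq> [] \<and> set xs \<subseteq> V \<and> (\<forall>i. Suc i < length xs \<longrightarrow> E (xs ! i) (xs ! Suc i))"

definition gdist :: "'a set \<Rightarrow> ('a \<Rightarrow> 'a \<Rightarrow> bool) \<Rightarrow> 'a \<Rightarrow> 'a \<Rightarrow> nat" where
  "gdist V E u v = (LEAST n. \<exists>xs. walk V E xs \<and> hd xs = u \<and> last xs = v \<and> length xs = Suc n)"

definition interval :: "'a set \<Rightarrow> ('a \<Rightarrow> 'a \<Rightarrow> bool) \<Rightarrow> 'a \<Rightarrow> 'a \<Rightarrow> 'a set" where
  "interval V E u v = {x. \<exists>xs. walk V E xs \<and> hd xs = u \<and> last xs = v
      \<and> length xs = Suc (gdist V E u v) \<and> x \<in> set xs}"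

(* quadruple {(a,b),(c,d)} represented as the set {{a,b},{c,d}} *)
definition quadruples :: "'a set \<Rightarrow> 'a set set set" where
  "quadruples U = {{{a, b}, {c, d}} | a b c d.
      a \<in> U \<and> b \<in> U \<and> c \<in> U \<and> d \<in> U \<and> distinct [a, b, c, d]}"

definition good_quadruples :: "'a set \<Rightarrow> ('a \<Rightarrow> 'a \<Rightarrow> bool) \<Rightarrow> 'a set \<Rightarrow> 'a set set set" where
  "good_quadruples V E U = {{{a, b}, {c, d}} | a b c d.
      a \<in> U \<and> b \<in> U \<and> c \<in> U \<and> d \<in> U \<and> distinct [a, b, c, d]
      \<and> interval V E a b \<inter> interval V E c d \<noteq> {}}"

definition q :: "'a set \<Rightarrow> nat" where
  "q U = card (quadruples U)"

definition q_good :: "'a set \<Rightarrow> ('a \<Rightarrow> 'a \<Rightarrow> bool) \<Rightarrow> 'a set \<Rightarrow> nat" where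
  "q_good V E U = card (good_quadruples V E U)"

definition eps :: "'a set \<Rightarrow> ('a \<Rightarrow> 'a \<Rightarrow> bool) \<Rightarrow> 'a set \<Rightarrow> real" where
  "eps V E U = real (q_good V E U) / (8 * real (q U))"

definition participation :: "'a set \<Rightarrow> ('a \<Rightarrow> 'a \<Rightarrow> bool) \<Rightarrow> 'a set \<Rightarrow> 'a \<Rightarrow> nat" where
  "participation V E U x = card {Q \<in> good_quadruples V E U. x \<in> \<Union>Q}"

definition good_partners :: "'a set \<Rightarrow> ('a \<Rightarrow> 'a \<Rightarrow> bool) \<Rightarrow> 'a set \<Rightarrow> 'a \<Rightarrow> 'a \<Rightarrow> nat" where
  "good_partners V E U a b = card {P. \<exists>c d. P = {c, d} \<and> c \<in> U \<and> d \<in> U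
      \<and> {{a, b}, {c, d}} \<in> good_quadruples V E U}"

definition U_good :: "'a set \<Rightarrow> ('a \<Rightarrow> 'a \<Rightarrow> bool) \<Rightarrow> 'a set \<Rightarrow> 'a \<Rightarrow> bool" where
  "U_good V E U a \<longleftrightarrow> a \<in> U \<and> (\<exists>Ua \<subseteq> U.
      int (card Ua) \<ge> \<lceil>4 * eps V E U * (real (card U) - 1)\<rceil>
    \<and> (\<forall>b\<in>Ua. int (good_partners V E U a b)
          \<ge> \<lceil>4 * eps V E U * real ((card U - 2) choose 2)\<rceil>))"

end

(* Every node of U lies in (n - 1) * C(n - 2, 2) quadruples, where n = |U|, so double counting
   gives 4 q = n (n - 1) C(n - 2, 2), and likewise the participations of all nodes add up to
   4 q_good.  A node a of maximum participation therefore lies in at least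
   4 q_good / n = 8 eps (n - 1) C(n - 2, 2) good quadruples.  Splitting these according to the
   partner b of a, each b contributes at most C(n - 2, 2); if fewer than 4 eps (n - 1) partners
   contributed at least 4 eps C(n - 2, 2), the total would fall short of this bound.
   The argument is pure counting: of the graph only the finiteness of U is used. *)
theory Submission
  imports Defs
begin

lemma mem_quadruplesD:
  assumes "{{a, b}, {c, d}} \<in> quadruples U"
  shows "distinct [a, b, c, d] \<and> {a, b, c, d} \<subseteq> U"
  using assms unfolding quadruples_def by (auto simp: doubleton_eq_iff)

lemma quadruplesE:
  assumes "Q \<in> quadruples U"
  obtains a b c d where "Q = {{a, b}, {c, d}}" "distinct [a, b, c, d]" "{a, b, c, d} \<subseteq> U"
  using assms unfolding quadruples_def by blast

lemma finite_quadruples: "finite U \<Longrightarrow> finite (quadruples U)"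
  by (rule finite_subset[where B = "Pow (Pow U)"]) (auto simp: quadruples_def)

lemma good_quadruples_subset: "good_quadruples V E U \<subseteq> quadruples U"
  unfolding good_quadruples_def quadruples_def by blast

lemma Union_quadruple:
  assumes "Q \<in> quadruples U"
  shows "\<Union>Q \<subseteq> U" "card (\<Union>Q) = 4"
proof -
  obtain a b c d where "Q = {{a, b}, {c, d}}" "distinct [a, b, c, d]" "{a, b, c, d} \<subseteq> U"
    using assms by (rule quadruplesE)
  moreover from this have "\<Union>Q = {a, b, c, d}" by auto
  ultimately show "\<Union>Q \<subseteq> U" "card (\<Union>Q) = 4" by simp_all
qed

lemma quadruple_containing_eq:
  assumes "x \<in> \<Union>{{a, b}, {c, d}}"
  shows "\<exists>y c' d'. {{a, b}, {c, d}} = {{x, y}, {c', d'}}"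
  using assms by (auto simp: insert_commute)

lemma doubleton_pair_cancel:
  assumes "{{x, b}, P} = {{x, b'}, P'}" "x \<notin> P" "x \<notin> P'"
  shows "b = b' \<and> P = P'"
  using assms by (auto simp: doubleton_eq_iff)

definition partners :: "'a set \<Rightarrow> 'a set set set \<Rightarrow> 'a \<Rightarrow> 'a \<Rightarrow> 'a set set" where
  "partners U S x b = {P. \<exists>c d. P = {c, d} \<and> c \<in> U \<and> d \<in> U \<and> {{x, b}, {c, d}} \<in> S}"

lemma good_partners_eq_card_partners:
  "good_partners V E U a b = card (partners U (good_quadruples V E U) a b)"
  unfolding good_partners_def partners_def ..

lemma partners_mono: "S \<subseteq> S' \<Longrightarrow> partners U S x b \<subseteq> partners U S' x b"
  unfolding partners_def by blast

lemma finite_partners: "finite U \<Longrightarrow> finite (partners U S x b)"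
  by (rule finite_subset[where B = "Pow U"]) (auto simp: partners_def)

lemma partners_quadruples:
  assumes "x \<in> U" "b \<in> U" "x \<noteq> b"
  shows "partners U (quadruples U) x b = {P. P \<subseteq> U - {x, b} \<and> card P = 2}"
proof (intro set_eqI iffI)
  fix P assume "P \<in> partners U (quadruples U) x b"
  then obtain c d where "P = {c, d}" "{{x, b}, {c, d}} \<in> quadruples U"
    unfolding partners_def by blast
  moreover from mem_quadruplesD[OF this(2)] have "distinct [x, b, c, d]" "{c, d} \<subseteq> U"
    by auto
  ultimately show "P \<in> {P. P \<subseteq> U - {x, b} \<and> card P = 2}"
    by auto
next
  fix P assume P: "P \<in> {P. P \<subseteq> U - {x, b} \<and> card P = 2}"
  then have "card P = 2" by simp
  then obtain c d where cd: "P = {c, d}" "c \<noteq> d"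
    unfolding card_2_iff by blast
  with P have "distinct [x, b, c, d]" "{x, b, c, d} \<subseteq> U"
    using assms by auto
  then have "{{x, b}, {c, d}} \<in> quadruples U"
    unfolding quadruples_def by (intro CollectI exI[of _ x] exI[of _ b] exI[of _ c] exI[of _ d]) simp
  with cd \<open>{x, b, c, d} \<subseteq> U\<close> show "P \<in> partners U (quadruples U) x b"
    unfolding partners_def by blast
qed

lemma card_partners_quadruples:
  assumes "finite U" "x \<in> U" "b \<in> U" "x \<noteq> b"
  shows "card (partners U (quadruples U) x b) = (card U - 2) choose 2"
proof -
  have "card (U - {x, b}) = card U - 2"
    using assms by (simp add: card_Diff_subset)
  moreover have "finite (U - {x, b})"
    using assms(1) by blast
  ultimately show ?thesis
    using n_subsets[of "U - {x, b}" 2] by (simp add: partners_quadruples[OF assms(2-)])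
qed

lemma card_partners_le:
  assumes "S \<subseteq> quadruples U" "finite U" "x \<in> U" "b \<in> U" "x \<noteq> b"
  shows "card (partners U S x b) \<le> (card U - 2) choose 2"
  using finite_partners[OF assms(2)] card_mono[OF _ partners_mono[OF assms(1)]]
    card_partners_quadruples[OF assms(2-)]
  by metis

text \<open>A quadruple containing x is determined by the partner b of x and the opposite pair.\<close>

lemma card_quadruples_containing:
  assumes S: "S \<subseteq> quadruples U" and "finite U" "x \<in> U"
  shows "card {Q \<in> S. x \<in> \<Union>Q} = (\<Sum>b\<in>U - {x}. card (partners U S x b))"
proof -
  let ?f = "\<lambda>(b, P). {{x, b}, P}"
  let ?A = "SIGMA b:U - {x}. partners U S x b"
  have in_S: "{{x, b}, P} \<in> S" and x_notin: "x \<notin> P" if bP: "(b, P) \<in> ?A" for b P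
  proof -
    obtain c d where P: "P = {c, d}" "{{x, b}, {c, d}} \<in> S"
      using bP unfolding partners_def by blast
    have "distinct [x, b, c, d]"
      using mem_quadruplesD[OF subsetD[OF S P(2)]] ..
    with P show "{{x, b}, P} \<in> S" "x \<notin> P" by simp_all
  qed
  have "inj_on ?f ?A"
  proof (rule inj_onI)
    fix u v assume u: "u \<in> ?A" and v: "v \<in> ?A" and eq: "?f u = ?f v"
    obtain b P b' P' where uv: "u = (b, P)" "v = (b', P')"
      by fastforce
    have "b = b' \<and> P = P'"
      using eq u v uv x_notin by (intro doubleton_pair_cancel) simp_all
    with uv show "u = v" by simp
  qed
  moreover have "?f ` ?A = {Q \<in> S. x \<in> \<Union>Q}"
  proof (intro equalityI subsetI)
    fix Q assume "Q \<in> ?f ` ?A"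
    then obtain b P where "(b, P) \<in> ?A" "Q = {{x, b}, P}" by blast
    with in_S show "Q \<in> {Q \<in> S. x \<in> \<Union>Q}" by blast
  next
    fix Q assume "Q \<in> {Q \<in> S. x \<in> \<Union>Q}"
    then have Q: "Q \<in> S" "x \<in> \<Union>Q" by simp_all
    obtain a b c d where "Q = {{a, b}, {c, d}}"
      using subsetD[OF S Q(1)] by (rule quadruplesE)
    with Q obtain y c d where Q_eq: "Q = {{x, y}, {c, d}}"
      using quadruple_containing_eq by metis
    with Q(1) have y_cd: "{{x, y}, {c, d}} \<in> S" by simp
    then have "distinct [x, y, c, d] \<and> {x, y, c, d} \<subseteq> U"
      using S by (intro mem_quadruplesD) blast
    with y_cd have "(y, {c, d}) \<in> ?A"
      unfolding partners_def by auto
    with Q_eq show "Q \<in> ?f ` ?A" by (intro image_eqI[where x = "(y, {c, d})"]) simp_all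
  qed
  ultimately have "card {Q \<in> S. x \<in> \<Union>Q} = card ?A"
    using card_image by fastforce
  also have "\<dots> = (\<Sum>b\<in>U - {x}. card (partners U S x b))"
    using assms(2) by (intro card_SigmaI) (simp_all add: finite_partners)
  finally show ?thesis .
qed

lemma sum_card_quadruples_containing:
  assumes "finite U" "S \<subseteq> quadruples U"
  shows "(\<Sum>x\<in>U. card {Q \<in> S. x \<in> \<Union>Q}) = 4 * card S"
proof -
  have "finite S"
    using assms finite_quadruples finite_subset by blast
  then have "(\<Sum>x\<in>U. card {Q \<in> S. x \<in> \<Union>Q}) = (\<Sum>Q\<in>S. card {x \<in> U. x \<in> \<Union>Q})"
    using sum.swap_restrict[OF assms(1), of S "\<lambda>_ _. 1 :: nat" "\<lambda>x Q. x \<in> \<Union>Q"] by simp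
  also have "\<dots> = (\<Sum>Q\<in>S. 4)"
  proof (rule sum.cong)
    fix Q assume "Q \<in> S"
    then have "\<Union>Q \<subseteq> U" "card (\<Union>Q) = 4"
      using assms(2) Union_quadruple by blast+
    moreover from this have "{x \<in> U. x \<in> \<Union>Q} = \<Union>Q" by blast
    ultimately show "card {x \<in> U. x \<in> \<Union>Q} = 4" by simp
  qed simp
  finally show ?thesis by simp
qed

text \<open>A reverse Markov inequality.\<close>

lemma card_large_values_ge:
  fixes g :: "'b \<Rightarrow> real" and c M :: real
  assumes "finite R" "M > 0" "c \<ge> 0" "\<And>b. b \<in> R \<Longrightarrow> g b \<le> M"
    and "2 * c * card R * M \<le> (\<Sum>b\<in>R. g b)"
  shows "c * card R \<le> card {b \<in> R. c * M \<le> g b}"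
proof -
  define L where "L = {b \<in> R. c * M \<le> g b}"
  have L: "L \<subseteq> R" "finite L"
    using assms(1) unfolding L_def by auto
  have "2 * c * card R * M \<le> (\<Sum>b\<in>L. g b) + (\<Sum>b\<in>R - L. g b)"
    using assms(5) sum.subset_diff[OF L(1) assms(1), of g] by simp
  also have "\<dots> \<le> card L * M + card (R - L) * (c * M)"
    using assms(4) L(1) unfolding L_def
    by (intro add_mono sum_bounded_above) (auto simp: subset_iff)
  also have "\<dots> = (card L + c * (real (card R) - card L)) * M"
    using L assms(1) by (simp add: card_Diff_subset card_mono algebra_simps)
  finally have "2 * c * card R \<le> card L + c * (real (card R) - card L)"
    using assms(2) by simp
  moreover have "c * card L \<ge> 0"
    using assms(3) by simp
  ultimately show ?thesis
    unfolding L_def[symmetric] by (simp add: algebra_simps)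
qed

lemma four_mult_q:
  assumes "finite U"
  shows "4 * q U = card U * ((card U - 1) * ((card U - 2) choose 2))"
proof -
  have "4 * q U = (\<Sum>x\<in>U. card {Q \<in> quadruples U. x \<in> \<Union>Q})"
    unfolding q_def using sum_card_quadruples_containing[OF assms order_refl] by simp
  also have "\<dots> = (\<Sum>x\<in>U. (card U - 1) * ((card U - 2) choose 2))"
  proof (rule sum.cong[OF refl])
    fix x assume x: "x \<in> U"
    have "card {Q \<in> quadruples U. x \<in> \<Union>Q}
        = (\<Sum>b\<in>U - {x}. card (partners U (quadruples U) x b))"
      using order_refl assms x by (rule card_quadruples_containing)
    also have "\<dots> = (\<Sum>b\<in>U - {x}. (card U - 2) choose 2)"
      using card_partners_quadruples[OF assms x] by (intro sum.cong) auto
    also have "\<dots> = (card U - 1) * ((card U - 2) choose 2)"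
      using assms x by simp
    finally show "card {Q \<in> quadruples U. x \<in> \<Union>Q} = (card U - 1) * ((card U - 2) choose 2)" .
  qed
  finally show ?thesis by simp
qed

lemma q_good_eq_eps:
  assumes "finite U"
  shows "real (q_good V E U) = 8 * eps V E U * real (q U)"
proof (cases "q U = 0")
  case True
  have "q_good V E U \<le> q U"
    unfolding q_good_def q_def
    using finite_quadruples[OF assms] good_quadruples_subset by (rule card_mono)
  with True show ?thesis by simp
next
  case False
  then show ?thesis by (simp add: eps_def)
qed

lemma sum_participation:
  assumes "finite U"
  shows "(\<Sum>x\<in>U. participation V E U x) = 4 * q_good V E U"
  unfolding participation_def q_good_def
  using assms good_quadruples_subset by (rule sum_card_quadruples_containing)

lemma participation_eq_sum_good_partners:
  assumes "finite U" "a \<in> U"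
  shows "participation V E U a = (\<Sum>b\<in>U - {a}. good_partners V E U a b)"
  unfolding participation_def good_partners_eq_card_partners
  using good_quadruples_subset assms by (rule card_quadruples_containing)

lemma good_partners_le:
  assumes "finite U" "a \<in> U" "b \<in> U" "a \<noteq> b"
  shows "good_partners V E U a b \<le> (card U - 2) choose 2"
  unfolding good_partners_eq_card_partners
  using good_quadruples_subset assms by (rule card_partners_le)

lemma max_participation_ge:
  assumes "finite U" "a \<in> U" "\<forall>x\<in>U. participation V E U x \<le> participation V E U a"
  shows "8 * eps V E U * real (card U - 1) * real ((card U - 2) choose 2)
    \<le> real (participation V E U a)"
proof -
  let ?n = "real (card U)" and ?M = "real (card U - 1) * real ((card U - 2) choose 2)"
  have "4 * q_good V E U \<le> card U * participation V E U a"
    using sum_bounded_above[of U "participation V E U"] assms by (simp flip: sum_participation)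
  then have "4 * real (q_good V E U) \<le> ?n * real (participation V E U a)"
    by (metis of_nat_le_iff of_nat_mult of_nat_numeral)
  moreover have "4 * real (q_good V E U) = ?n * (8 * eps V E U * ?M)"
    using q_good_eq_eps[OF assms(1)] arg_cong[OF four_mult_q[OF assms(1)], of real] by simp
  moreover have "?n > 0"
    using assms(1,2) card_gt_0_iff by fastforce
  ultimately show ?thesis by (simp add: mult.assoc)
qed

theorem mainTheorem7:
  fixes V :: "'a set" and E :: "'a \<Rightarrow> 'a \<Rightarrow> bool" and U :: "'a set" and w :: nat and a :: 'a
  assumes "simple_graph V E"
    and "connected_graph V E"
    and "\<not> has_complete_minor V E w"
    and "U \<subseteq> V"
    and "card U \<ge> max w 4"
    and "a \<in> U"
    and "\<forall>x\<in>U. participation V E U x \<le> participation V E U a"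
  shows "U_good V E U a"
proof -
  let ?M = "(card U - 2) choose 2" and ?c = "4 * eps V E U"
  let ?Ua = "{b \<in> U - {a}. ?c * ?M \<le> good_partners V E U a b}"
  have fin: "finite U"
    using assms(1,4) finite_subset unfolding simple_graph_def by blast
  have card_R: "card (U - {a}) = card U - 1"
    using fin assms(6) by simp
  have "?M > 0"
    using assms(5) by auto
  moreover have "?c \<ge> 0"
    unfolding eps_def by simp
  moreover have "2 * ?c * card (U - {a}) * ?M \<le> (\<Sum>b\<in>U - {a}. real (good_partners V E U a b))"
    using max_participation_ge[OF fin assms(6,7)]
      participation_eq_sum_good_partners[OF fin assms(6)]
    by (simp add: card_R)
  moreover have "good_partners V E U a b \<le> ?M" if "b \<in> U - {a}" for b
    using good_partners_le[OF fin assms(6)] that by auto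
  ultimately have "?c * card (U - {a}) \<le> card ?Ua"
    using fin by (intro card_large_values_ge) auto
  then show ?thesis
    unfolding U_good_def using assms(6) card_R assms(5)
    by (intro conjI exI[of _ ?Ua]) (auto simp: ceiling_le_iff)
qed

end
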